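(* Let $V$ be countably infinite with a fixed bijection $\xi:V\to\mathbb N$. For every finite simple graph $H$ and every $G\in\mathscr{G}(V)$, the set $S(H,G)$ is a closed nonempty subset of $[0,1]$. For $H=K_2$ (a single edge), $S(K_2,G)$ is a closed subinterval $[a,b]$ of $[0,1]$ (possibly with $a=b$). Conversely, for every $0\le a\le b\le1$ there exists $G\in\mathscr{G}(V)$ with $S(K_2,G)=[a,b]$.
   Context: $K_V$ is the set of $2$-element subsets of $V$; $\mathscr{G}(V)$ is the set of simple graphs on $V$ identified with their edge sets. For $G\in\mathscr{G}(V)$ and $n\in\mathbb N$, $G_V[n]$ is the finite induced subgraph of $G$ on the vertices $\xi^{-1}(1),\dots,\xi^{-1}(n)$. For finite simple graphs $H$ and $F$, $\mathrm{ind}(H,F)$ is the number of injective maps $V(H)\to V(F)$ that are isomorphisms of $H$ onto the induced subgraph of $F$ on the image, and $t_{\mathrm{ind}}(H,F) := \mathrm{ind}(H,F)\,(|V(F)|-|V(H)|)!/|V(F)|!$ (taken to be $0$ if $|V(F)|<|V(H)|$). $S(H,G)$ is the set of subsequential limits (accumulation points) of the sequence $n\mapsto t_{\mathrm{ind}}(H,G_V[n])$. Note $t_{\mathrm{ind}}(K_2,F)$ equals the edge density $e(F):=|E(F)|/\binom{|V(F)|}{2}$. *)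

theory Defs
  imports "HOL-Analysis.Analysis" "HOL-Library.FuncSet"
begin

definition two_subsets :: "'v set \<Rightarrow> 'v set set" where
  "two_subsets V = {e. e \<subseteq> V \<and> card e = 2}"

definition graphs_on :: "'v set \<Rightarrow> 'v set set set" where
  "graphs_on V = Pow (two_subsets V)"

definition finite_simple_graph :: "'a set \<Rightarrow> 'a set set \<Rightarrow> bool" where
  "finite_simple_graph VH EH \<longleftrightarrow> finite VH \<and> EH \<subseteq> two_subsets VH"

text \<open>ind(H,F): number of injective maps V(H) -> V(F) that are isomorphisms of H
  onto the induced subgraph of F on the image (maps taken extensionally on V(H)).\<close>
definition ind :: "'a set \<Rightarrow> 'a set set \<Rightarrow> 'b set \<Rightarrow> 'b set set \<Rightarrow> nat" where
  "ind VH EH VF EF = card {f \<in> VH \<rightarrow>\<^sub>E VF. inj_on f VH \<and>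
      (\<forall>u\<in>VH. \<forall>v\<in>VH. u \<noteq> v \<longrightarrow> ({u, v} \<in> EH \<longleftrightarrow> {f u, f v} \<in> EF))}"

definition t_ind :: "'a set \<Rightarrow> 'a set set \<Rightarrow> 'b set \<Rightarrow> 'b set set \<Rightarrow> real" where
  "t_ind VH EH VF EF =
     (if card VF < card VH then 0
      else real (ind VH EH VF EF) * fact (card VF - card VH) / fact (card VF))"

definition trunc_vertices :: "('v \<Rightarrow> nat) \<Rightarrow> nat \<Rightarrow> 'v set" where
  "trunc_vertices \<xi> n = {v. \<xi> v \<in> {1..n}}"

definition trunc_edges :: "('v \<Rightarrow> nat) \<Rightarrow> 'v set set \<Rightarrow> nat \<Rightarrow> 'v set set" where
  "trunc_edges \<xi> G n = {e \<in> G. e \<subseteq> trunc_vertices \<xi> n}"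

definition S_lim :: "('v \<Rightarrow> nat) \<Rightarrow> 'a set \<Rightarrow> 'a set set \<Rightarrow> 'v set set \<Rightarrow> real set" where
  "S_lim \<xi> VH EH G =
     {L. \<exists>r. strict_mono r \<and>
        ((\<lambda>k. t_ind VH EH (trunc_vertices \<xi> (r k)) (trunc_edges \<xi> G (r k))) \<longlonglongrightarrow> L)}"

definition K2_V :: "nat set" where "K2_V = {0, 1}"
definition K2_E :: "nat set set" where "K2_E = {{0, 1}}"

end

theory Submission
  imports Defs
begin

(* Sections of the file:
   1. Subsequential limits of real sequences: the set of them is closed, nonempty for
      sequences in a compact set, and an interval whenever consecutive terms get close
      (a discrete intermediate value argument).
   2. Pair densities P(n)/(n(n-1)) of counts that grow by at most 2n per step have
      consecutive differences tending to 0.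
   3. Counting: t_ind lies in [0,1], and t_ind(K_2,F) is the number of ordered adjacent
      pairs of F divided by |F|(|F|-1).
   4. Truncations G_V[n] under a vertex enumeration: adding vertex n+1 adds twice its number
      of back-neighbours, so the edge densities of any G satisfy the hypotheses of 2 and 1.
   5. The construction: on phases [w_k, w_(k+1)) with w_(k+1) = w_k^2 we aim alternately at
      density b and a, greedily joining the new vertex to all earlier ones iff the current
      density is below the target.  The density then stays within O(1/n) of [a,b] and comes
      within O(1/n) of the target at the end of every phase, so its limit set is [a,b]. *)

definition subseq_limits :: "(nat \<Rightarrow> real) \<Rightarrow> real set" where
  "subseq_limits x = {L. \<exists>r. strict_mono r \<and> (\<lambda>k. x (r k)) \<longlonglongrightarrow> L}"

lemma S_lim_eq_subseq_limits:
  "S_lim \<xi> VH EH G = subseq_limits (\<lambda>n. t_ind VH EH (trunc_vertices \<xi> n) (trunc_edges \<xi> G n))"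
  by (simp add: S_lim_def subseq_limits_def)

lemma subseq_limits_iff:
  "L \<in> subseq_limits x \<longleftrightarrow> (\<forall>e>0. \<forall>N. \<exists>n\<ge>N. \<bar>x n - L\<bar> < e)"
proof
  assume "L \<in> subseq_limits x"
  then obtain r where r: "strict_mono r" "(\<lambda>k. x (r k)) \<longlonglongrightarrow> L"
    by (auto simp: subseq_limits_def)
  show "\<forall>e>0. \<forall>N. \<exists>n\<ge>N. \<bar>x n - L\<bar> < e"
  proof (intro allI impI)
    fix e :: real and N :: nat
    assume "e > 0"
    obtain k0 where "\<forall>k\<ge>k0. norm (x (r k) - L) < e"
      using LIMSEQ_D[OF r(2) \<open>e > 0\<close>] by blast
    then have k0: "\<And>k. k \<ge> k0 \<Longrightarrow> \<bar>x (r k) - L\<bar> < e"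
      by simp
    have "r (max k0 N) \<ge> N"
      using seq_suble[OF r(1), of "max k0 N"] by linarith
    with k0[of "max k0 N"] show "\<exists>n\<ge>N. \<bar>x n - L\<bar> < e" by auto
  qed
next
  assume freq: "\<forall>e>0. \<forall>N. \<exists>n\<ge>N. \<bar>x n - L\<bar> < e"
  have "\<exists>r. \<forall>k. \<bar>x (r k) - L\<bar> < inverse (real (Suc k)) \<and> r k < r (Suc k)"
  proof (rule dependent_nat_choice)
    show "\<exists>n. \<bar>x n - L\<bar> < inverse (real (Suc 0))"
      using freq[rule_format, of 1 0] by auto
    show "\<exists>n'. \<bar>x n' - L\<bar> < inverse (real (Suc (Suc k))) \<and> n < n'" for n k
      using freq[rule_format, of "inverse (real (Suc (Suc k)))" "Suc n"] by auto
  qed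
  then obtain r where close: "\<And>k. \<bar>x (r k) - L\<bar> < inverse (real (Suc k))"
    and step: "\<And>k. r k < r (Suc k)" by blast
  have "\<forall>k. norm (x (r k) - L) \<le> inverse (real (Suc k))"
    using close by (simp add: less_imp_le)
  then have "(\<lambda>k. x (r k) - L) \<longlonglongrightarrow> 0"
    using Lim_null_comparison[OF always_eventually LIMSEQ_inverse_real_of_nat, of "\<lambda>k. x (r k) - L"]
    by blast
  then have "(\<lambda>k. x (r k)) \<longlonglongrightarrow> L"
    by (simp add: Lim_null[symmetric])
  moreover have "strict_mono r"
    using step by (simp add: strict_mono_Suc_iff)
  ultimately show "L \<in> subseq_limits x"
    by (auto simp: subseq_limits_def)
qed

lemma closed_subseq_limits: "closed (subseq_limits x)"
proof -
  have "L \<in> subseq_limits x" if near: "\<forall>e>0. \<exists>y\<in>subseq_limits x. dist y L < e" for L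
    unfolding subseq_limits_iff
  proof (intro allI impI)
    fix e :: real and N :: nat
    assume "e > 0"
    then obtain y where y: "y \<in> subseq_limits x" "\<bar>y - L\<bar> < e / 2"
      using near[rule_format, of "e / 2"] by (auto simp: dist_real_def)
    then obtain n where "n \<ge> N" "\<bar>x n - y\<bar> < e / 2"
      using \<open>e > 0\<close> unfolding subseq_limits_iff by (meson half_gt_zero)
    with y(2) show "\<exists>n\<ge>N. \<bar>x n - L\<bar> < e"
      by (intro exI[of _ n]) linarith
  qed
  then have "closure (subseq_limits x) \<subseteq> subseq_limits x"
    by (auto simp: closure_approachable)
  then show ?thesis
    by (simp add: closure_subset_eq)
qed

lemma subseq_limits_nonempty:
  assumes "compact K" "\<And>n. x n \<in> K"
  shows "subseq_limits x \<noteq> {}"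
proof -
  obtain L r where "strict_mono r" "(x \<circ> r) \<longlonglongrightarrow> L"
    using compact_imp_seq_compact[OF assms(1)] assms(2) by (metis seq_compactE)
  then have "L \<in> subseq_limits x"
    by (auto simp: subseq_limits_def o_def)
  then show ?thesis by auto
qed

lemma subseq_limits_subset:
  assumes "closed K" "\<And>n. x n \<in> K"
  shows "subseq_limits x \<subseteq> K"
proof
  fix L
  assume "L \<in> subseq_limits x"
  then obtain r where "(\<lambda>k. x (r k)) \<longlonglongrightarrow> L"
    by (auto simp: subseq_limits_def)
  then show "L \<in> K"
    using Lim_in_closed_set[OF assms(1) _ sequentially_bot, of "\<lambda>k. x (r k)"] assms(2) by auto
qed

lemma subseq_limits_ge:
  assumes "L \<in> subseq_limits x" "eventually (\<lambda>n. f n \<le> x n) sequentially" "f \<longlonglongrightarrow> c"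
  shows "c \<le> L"
proof -
  obtain r where r: "strict_mono r" "(\<lambda>k. x (r k)) \<longlonglongrightarrow> L"
    using assms(1) by (auto simp: subseq_limits_def)
  have "(\<lambda>k. f (r k)) \<longlonglongrightarrow> c"
    using LIMSEQ_subseq_LIMSEQ[OF assms(3) r(1)] by (simp add: o_def)
  moreover have "eventually (\<lambda>k. f (r k) \<le> x (r k)) sequentially"
    using eventually_subseq[OF r(1) assms(2)] .
  ultimately show ?thesis
    using tendsto_le[OF sequentially_bot r(2)] by blast
qed

lemma subseq_limits_le:
  assumes "L \<in> subseq_limits x" "eventually (\<lambda>n. x n \<le> g n) sequentially" "g \<longlonglongrightarrow> c"
  shows "L \<le> c"
proof -
  have "- L \<in> subseq_limits (\<lambda>n. - x n)"
    using assms(1) by (auto simp: subseq_limits_def intro: tendsto_minus)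
  moreover have "(\<lambda>n. - g n) \<longlonglongrightarrow> - c"
    using assms(3) by (rule tendsto_minus)
  ultimately have "- c \<le> - L"
    using assms(2) by (intro subseq_limits_ge) auto
  then show ?thesis by simp
qed

lemma subseq_limitsI:
  fixes r :: "nat \<Rightarrow> nat" and e :: "nat \<Rightarrow> real"
  assumes "strict_mono r" "\<And>k. \<bar>x (r k) - c\<bar> \<le> e (r k)" "e \<longlonglongrightarrow> 0"
  shows "c \<in> subseq_limits x"
proof -
  have "(\<lambda>k. e (r k)) \<longlonglongrightarrow> 0"
    using LIMSEQ_subseq_LIMSEQ[OF assms(3,1)] by (simp add: o_def)
  then have "(\<lambda>k. x (r k) - c) \<longlonglongrightarrow> 0"
    by (rule Lim_null_comparison[rotated]) (use assms(2) in auto)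
  then show ?thesis
    using assms(1) by (auto simp: subseq_limits_def Lim_null[of "\<lambda>k. x (r k)"])
qed

lemma discrete_crossing:
  fixes x :: "nat \<Rightarrow> real"
  assumes "m \<le> n" "x m < c" "c \<le> x n"
  shows "\<exists>k\<ge>m. x k < c \<and> c \<le> x (Suc k)"
  using assms(1,3)
proof (induction n rule: dec_induct)
  case base
  then show ?case using assms(2) by simp
next
  case (step n)
  then show ?case
    by (cases "c \<le> x n") (auto intro!: exI[of _ n])
qed

(* If consecutive terms get arbitrarily close, the sequence cannot jump over any value between
   two accumulation points, so every such value is an accumulation point as well. *)
lemma subseq_limits_convex:
  assumes steps: "(\<lambda>n. x (Suc n) - x n) \<longlonglongrightarrow> 0"
    and p: "p \<in> subseq_limits x" and q: "q \<in> subseq_limits x" and c: "p \<le> c" "c \<le> q"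
  shows "c \<in> subseq_limits x"
proof (cases "c = p \<or> c = q")
  case True
  then show ?thesis using p q by auto
next
  case False
  with c have pc: "p < c" and cq: "c < q" by auto
  show ?thesis unfolding subseq_limits_iff
  proof (intro allI impI)
    fix e :: real and N :: nat
    assume "e > 0"
    obtain M where "\<forall>n\<ge>M. norm (x (Suc n) - x n - 0) < e"
      using LIMSEQ_D[OF steps \<open>e > 0\<close>] by blast
    then have M: "\<And>n. n \<ge> M \<Longrightarrow> \<bar>x (Suc n) - x n\<bar> < e"
      by simp
    obtain n1 where n1: "n1 \<ge> max M N" "\<bar>x n1 - p\<bar> < c - p"
      using p[unfolded subseq_limits_iff, rule_format, of "c - p" "max M N"] pc by auto
    obtain n2 where n2: "n2 \<ge> n1" "\<bar>x n2 - q\<bar> < q - c"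
      using q[unfolded subseq_limits_iff, rule_format, of "q - c" n1] cq by auto
    have "x n1 < c" "c \<le> x n2"
      using n1(2) n2(2) by linarith+
    then obtain k where k: "k \<ge> n1" "x k < c" "c \<le> x (Suc k)"
      using discrete_crossing[OF n2(1)] by blast
    have "\<bar>x (Suc k) - x k\<bar> < e"
      using M[of k] k(1) n1(1) by simp
    then show "\<exists>n\<ge>N. \<bar>x n - c\<bar> < e"
      using k n1(1) by (intro exI[of _ k]) auto
  qed
qed

lemma subseq_limits_interval:
  assumes range: "\<And>n. x n \<in> {lo..hi}" and steps: "(\<lambda>n. x (Suc n) - x n) \<longlonglongrightarrow> 0"
  shows "\<exists>a b. lo \<le> a \<and> a \<le> b \<and> b \<le> hi \<and> subseq_limits x = {a..b}"
proof -
  let ?S = "subseq_limits x"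
  have S: "closed ?S" "?S \<noteq> {}" "?S \<subseteq> {lo..hi}"
    using closed_subseq_limits subseq_limits_nonempty[OF compact_Icc range]
      subseq_limits_subset[OF closed_atLeastAtMost range] by auto
  then have bdd: "bdd_below ?S" "bdd_above ?S"
    by (meson bdd_above_Icc bdd_above_mono bdd_below_Icc bdd_below_mono)+
  have inf: "Inf ?S \<in> ?S" and sup: "Sup ?S \<in> ?S"
    using closed_contains_Inf[OF S(2) bdd(1) S(1)] closed_contains_Sup[OF S(2) bdd(2) S(1)] .
  have "?S = {Inf ?S..Sup ?S}"
  proof
    show "?S \<subseteq> {Inf ?S..Sup ?S}"
      using bdd by (auto intro: cInf_lower cSup_upper)
    show "{Inf ?S..Sup ?S} \<subseteq> ?S"
      using subseq_limits_convex[OF steps inf sup] by auto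
  qed
  moreover have "lo \<le> Inf ?S" "Sup ?S \<le> hi" "Inf ?S \<le> Sup ?S"
    using inf sup S(3) calculation by auto
  ultimately show ?thesis by blast
qed

lemma two_div_pred_tendsto_zero: "(\<lambda>n. 2 / (real n - 1)) \<longlonglongrightarrow> 0"
proof (rule LIMSEQ_offset[where k = 2])
  have "(\<lambda>n. 2 * inverse (real (Suc n))) \<longlonglongrightarrow> 0"
    by (rule tendsto_mult_right_zero[OF LIMSEQ_inverse_real_of_nat])
  then show "(\<lambda>n. 2 / (real (n + 2) - 1)) \<longlonglongrightarrow> 0"
    by (simp add: divide_inverse add.commute)
qed

lemma pair_count_nonneg: "0 \<le> real n * (real n - 1)"
  by (cases n) auto

(* One step of a pair density P/(n(n-1)) -> P'/((n+1)n) with P <= P' <= P + 2n moves it by at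
   most 2/(n+1): the new vertex contributes at most 2n ordered pairs. *)
lemma pair_density_step_bound:
  fixes P P' n :: real
  assumes n: "n \<ge> 2" and P: "0 \<le> P" "P \<le> n * (n - 1)" and P': "P \<le> P'" "P' \<le> P + 2 * n"
  shows "\<bar>P' / ((n + 1) * n) - P / (n * (n - 1))\<bar> \<le> 2 / (n + 1)"
proof -
  have D: "(n + 1) * n * (n - 1) > 0"
    using n by simp
  have "n - 1 \<noteq> 0" "n + 1 \<noteq> 0"
    using n by auto
  have "P' / ((n + 1) * n) = P' * (n - 1) / ((n + 1) * n * (n - 1))"
    using \<open>n - 1 \<noteq> 0\<close> by simp
  moreover have "P / (n * (n - 1)) = P * (n + 1) / ((n + 1) * n * (n - 1))"
    using \<open>n + 1 \<noteq> 0\<close> by (simp add: ac_simps)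
  ultimately have diff: "P' / ((n + 1) * n) - P / (n * (n - 1))
      = ((P' - P) * (n - 1) - 2 * P) / ((n + 1) * n * (n - 1))"
    by (simp add: diff_divide_distrib[symmetric] algebra_simps)
  have "0 \<le> (P' - P) * (n - 1)" "(P' - P) * (n - 1) \<le> (2 * n) * (n - 1)"
    using n P' by (auto intro: mult_nonneg_nonneg mult_right_mono)
  then have "\<bar>(P' - P) * (n - 1) - 2 * P\<bar> \<le> 2 * n * (n - 1)"
    using P by (simp add: abs_le_iff)
  then have "\<bar>(P' - P) * (n - 1) - 2 * P\<bar> / ((n + 1) * n * (n - 1))
      \<le> 2 * n * (n - 1) / ((n + 1) * n * (n - 1))"
    using D by (intro divide_right_mono) auto
  also have "\<dots> = 2 / (n + 1)"
  proof -
    have "n * (n - 1) \<noteq> 0"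
      using n by simp
    then have "2 * (n * (n - 1)) / ((n + 1) * (n * (n - 1))) = 2 / (n + 1)"
      by (rule nonzero_mult_divide_mult_cancel_right)
    then show ?thesis
      by (simp add: ac_simps)
  qed
  finally show ?thesis
    using D by (simp add: diff abs_divide)
qed

(* Consequently the densities of a count that starts at 0 and grows by at most 2n in step n
   have vanishing steps (the bound P n <= n(n-1) follows from the growth bound). *)
lemma pair_density_steps_vanish:
  fixes P :: "nat \<Rightarrow> nat"
  assumes P0: "P 0 = 0" and mono: "\<And>n. P n \<le> P (Suc n)" and step: "\<And>n. P (Suc n) \<le> P n + 2 * n"
  defines "x \<equiv> \<lambda>n. real (P n) / (real n * (real n - 1))"
  shows "(\<lambda>n. x (Suc n) - x n) \<longlonglongrightarrow> 0"
proof -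
  have bound: "real (P n) \<le> real n * (real n - 1)" for n
  proof (induction n)
    case (Suc n)
    have "real (P (Suc n)) \<le> real (P n) + 2 * real n"
      using step[of n] by (metis of_nat_add of_nat_le_iff of_nat_mult of_nat_numeral)
    with Suc show ?case by (simp add: algebra_simps)
  qed (simp add: P0)
  have "\<bar>x (Suc n) - x n\<bar> \<le> 2 / (real n - 1)" if "n \<ge> 2" for n
  proof -
    have "\<bar>x (Suc n) - x n\<bar> \<le> 2 / (real n + 1)"
      unfolding x_def using pair_density_step_bound[of "real n" "real (P n)" "real (P (Suc n))"]
        that bound[of n] mono[of n] step[of n] by (simp add: algebra_simps)
    also have "\<dots> \<le> 2 / (real n - 1)"
      using that by (simp add: frac_le)
    finally show ?thesis .
  qed
  then have "eventually (\<lambda>n. norm (x (Suc n) - x n) \<le> 2 / (real n - 1)) sequentially"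
    by (auto simp: eventually_sequentially)
  then show ?thesis
    by (rule Lim_null_comparison[OF _ two_div_pred_tendsto_zero])
qed

(* N(N-1)...(N-k+1) * (N-k)! = N!, the number of injections of a k-set into an N-set. *)
lemma falling_factorial_times_fact:
  "k \<le> N \<Longrightarrow> prod ((-) N) {0..<k} * fact (N - k) = (fact N :: nat)"
proof (induction k)
  case 0
  then show ?case by simp
next
  case (Suc k)
  then have "N - k = Suc (N - Suc k)"
    by simp
  then have "fact (N - k) = (N - k) * (fact (N - Suc k) :: nat)"
    by simp
  with Suc show ?case by (simp add: algebra_simps)
qed

(* Induced embeddings are in particular injections, so t_ind is a probability. *)
lemma t_ind_bounds:
  assumes "finite VH" "finite VF"
  shows "t_ind VH EH VF EF \<in> {0..1}"
proof (cases "card VF < card VH")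
  case True
  then show ?thesis by (simp add: t_ind_def)
next
  case False
  let ?h = "card VH" and ?N = "card VF"
  have "ind VH EH VF EF \<le> card {f \<in> VH \<rightarrow>\<^sub>E VF. inj_on f VH}"
    unfolding ind_def
    by (rule card_mono) (use assms in \<open>auto intro: finite_subset[OF _ finite_PiE[of VH "\<lambda>_. VF"]]\<close>)
  also have "\<dots> = prod ((-) ?N) {0..<?h}"
    using card_inj_on_subset_funcset[OF assms order_refl] by simp
  finally have "ind VH EH VF EF * fact (?N - ?h) \<le> (fact ?N :: nat)"
    using falling_factorial_times_fact[of ?h ?N] False by (metis mult_le_mono1 not_le)
  then have "real (ind VH EH VF EF) * fact (?N - ?h) \<le> fact ?N"
    by (metis of_nat_fact of_nat_le_iff of_nat_mult)
  then show ?thesis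
    using False by (simp add: t_ind_def divide_le_eq)
qed

(* The ordered pairs (u,v) spanning an edge of G inside T; they count each edge twice. *)
definition ordered_edges :: "'v set set \<Rightarrow> 'v set \<Rightarrow> ('v \<times> 'v) set" where
  "ordered_edges G T = {(u, v). u \<in> T \<and> v \<in> T \<and> u \<noteq> v \<and> {u, v} \<in> G}"

lemma finite_ordered_edges: "finite T \<Longrightarrow> finite (ordered_edges G T)"
  by (rule finite_subset[of _ "T \<times> T"]) (auto simp: ordered_edges_def)

lemma card_ordered_edges_insert:
  assumes "finite T" "w \<notin> T"
  shows "card (ordered_edges G (insert w T))
       = card (ordered_edges G T) + 2 * card {u \<in> T. {u, w} \<in> G}"
proof -
  let ?N = "{u \<in> T. {u, w} \<in> G}"
  have split: "ordered_edges G (insert w T) = ordered_edges G T \<union> (?N \<times> {w} \<union> {w} \<times> ?N)"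
    using assms(2) by (auto simp: ordered_edges_def insert_commute)
  have disjoint: "ordered_edges G T \<inter> (?N \<times> {w} \<union> {w} \<times> ?N) = {}"
    using assms(2) by (auto simp: ordered_edges_def)
  have "card (?N \<times> {w} \<union> {w} \<times> ?N) = 2 * card ?N"
    using assms by (subst card_Un_disjoint) (auto simp: card_cartesian_product)
  then show ?thesis
    unfolding split using assms(1) disjoint
    by (simp add: card_Un_disjoint finite_ordered_edges)
qed

lemma K2_embedding_iff:
  assumes "f \<in> K2_V \<rightarrow>\<^sub>E VF"
  shows "(inj_on f K2_V \<and>
      (\<forall>u\<in>K2_V. \<forall>v\<in>K2_V. u \<noteq> v \<longrightarrow> ({u, v} \<in> K2_E \<longleftrightarrow> {f u, f v} \<in> EF)))
   \<longleftrightarrow> (f 0, f 1) \<in> ordered_edges EF VF"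
proof -
  have "f 0 \<in> VF" "f 1 \<in> VF"
    using PiE_mem[OF assms] by (auto simp: K2_V_def)
  moreover have "inj_on f K2_V \<longleftrightarrow> f 0 \<noteq> f 1"
    by (auto simp: K2_V_def)
  moreover have "(\<forall>u\<in>K2_V. \<forall>v\<in>K2_V. u \<noteq> v \<longrightarrow> ({u, v} \<in> K2_E \<longleftrightarrow> {f u, f v} \<in> EF))
      \<longleftrightarrow> {f 0, f 1} \<in> EF"
    by (simp add: K2_V_def K2_E_def
        insert_commute[of "f (Suc 0)" "f 0"] insert_commute[of "Suc 0" 0])
  ultimately show ?thesis
    by (auto simp: ordered_edges_def)
qed

(* Induced copies of K_2 correspond to ordered edges via f |-> (f 0, f 1). *)
lemma ind_K2: "ind K2_V K2_E VF EF = card (ordered_edges EF VF)"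
proof -
  let ?A = "{f \<in> K2_V \<rightarrow>\<^sub>E VF. (f 0, f 1) \<in> ordered_edges EF VF}"
  let ?pair = "\<lambda>f. (f 0, f 1)"
  have "inj_on ?pair ?A"
    by (rule inj_onI, rule PiE_ext) (auto simp: K2_V_def)
  moreover have "?pair ` ?A = ordered_edges EF VF"
  proof
    show "ordered_edges EF VF \<subseteq> ?pair ` ?A"
    proof clarify
      fix u v
      assume uv: "(u, v) \<in> ordered_edges EF VF"
      let ?f = "\<lambda>i. if i = 0 then u else if i = (1::nat) then v else undefined"
      have "?f \<in> ?A"
        using uv by (auto simp: K2_V_def ordered_edges_def split: if_splits)
      then show "(u, v) \<in> ?pair ` ?A"
        by (intro image_eqI[of _ _ ?f]) simp_all
    qed
  qed auto
  ultimately have "card ?A = card (ordered_edges EF VF)"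
    using card_image by fastforce
  moreover have "{f \<in> K2_V \<rightarrow>\<^sub>E VF. inj_on f K2_V \<and>
      (\<forall>u\<in>K2_V. \<forall>v\<in>K2_V. u \<noteq> v \<longrightarrow> ({u, v} \<in> K2_E \<longleftrightarrow> {f u, f v} \<in> EF))} = ?A"
    using K2_embedding_iff by blast
  ultimately show ?thesis
    by (simp add: ind_def)
qed

lemma t_ind_K2:
  assumes "finite VF"
  shows "t_ind K2_V K2_E VF EF
           = real (card (ordered_edges EF VF)) / (real (card VF) * (real (card VF) - 1))"
proof (cases "card VF < 2")
  case True
  then have "real (card VF) * (real (card VF) - 1) = 0"
    by (cases "card VF") auto
  with True show ?thesis by (simp add: t_ind_def K2_V_def)
next
  case False
  then obtain m where N: "card VF = Suc (Suc m)"
    by (metis add_2_eq_Suc le_Suc_ex not_less)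
  let ?E = "real (card (ordered_edges EF VF))"
  have fact_eq: "fact (Suc (Suc m)) = fact m * (real (card VF) * (real (card VF) - 1))"
    using N by (simp add: algebra_simps)
  have "card K2_V = 2"
    by (simp add: K2_V_def)
  then have "t_ind K2_V K2_E VF EF = fact m * ?E / fact (Suc (Suc m))"
    using N by (simp add: t_ind_def ind_K2)
  also have "\<dots> = fact m * ?E / (fact m * (real (card VF) * (real (card VF) - 1)))"
    by (simp only: fact_eq)
  also have "\<dots> = ?E / (real (card VF) * (real (card VF) - 1))"
    by (rule nonzero_mult_divide_mult_cancel_left) simp
  finally show ?thesis .
qed

locale vertex_enumeration =
  fixes \<xi> :: "'v \<Rightarrow> nat"
  assumes bij: "bij_betw \<xi> UNIV {1..}"
begin

lemma trunc_vertices_eq: "trunc_vertices \<xi> n = \<xi> -` {1..n}"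
  by (auto simp: trunc_vertices_def)

lemma finite_trunc_vertices: "finite (trunc_vertices \<xi> n)"
  unfolding trunc_vertices_eq by (rule finite_vimageI) (use bij in \<open>auto simp: bij_betw_def\<close>)

lemma card_trunc_vertices: "card (trunc_vertices \<xi> n) = n"
  unfolding trunc_vertices_eq using bij by (subst card_vimage_inj) (auto simp: bij_betw_def)

lemma vertex_with_index:
  obtains w where "\<xi> w = Suc n"
proof -
  have "Suc n \<in> range \<xi>"
    using bij by (auto simp: bij_betw_def)
  then show ?thesis
    using that by (metis rangeE)
qed

lemma trunc_vertices_Suc:
  assumes "\<xi> w = Suc n"
  shows "trunc_vertices \<xi> (Suc n) = insert w (trunc_vertices \<xi> n)"
proof -
  have "inj \<xi>"
    using bij by (simp add: bij_betw_def)
  then have index_iff: "\<xi> x = Suc n \<longleftrightarrow> x = w" for x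
    using assms by (metis injD)
  have "{1..Suc n} = insert (Suc n) {1..n}"
    by auto
  then show ?thesis
    unfolding trunc_vertices_def using index_iff by blast
qed

definition edge_pairs :: "'v set set \<Rightarrow> nat \<Rightarrow> nat" where
  "edge_pairs G n = card (ordered_edges G (trunc_vertices \<xi> n))"

lemma edge_density_eq:
  "t_ind K2_V K2_E (trunc_vertices \<xi> n) (trunc_edges \<xi> G n)
     = real (edge_pairs G n) / (real n * (real n - 1))"
proof -
  have "ordered_edges (trunc_edges \<xi> G n) (trunc_vertices \<xi> n) = ordered_edges G (trunc_vertices \<xi> n)"
    by (auto simp: ordered_edges_def trunc_edges_def)
  then show ?thesis
    by (simp add: t_ind_K2 finite_trunc_vertices card_trunc_vertices edge_pairs_def)
qed

lemma edge_pairs_Suc: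
  assumes "\<xi> w = Suc n"
  shows "edge_pairs G (Suc n) = edge_pairs G n + 2 * card {u \<in> trunc_vertices \<xi> n. {u, w} \<in> G}"
proof -
  have "w \<notin> trunc_vertices \<xi> n"
    using assms by (simp add: trunc_vertices_def)
  then show ?thesis
    unfolding edge_pairs_def trunc_vertices_Suc[OF assms]
    by (rule card_ordered_edges_insert[OF finite_trunc_vertices])
qed

lemma edge_pairs_growth:
  "edge_pairs G n \<le> edge_pairs G (Suc n) \<and> edge_pairs G (Suc n) \<le> edge_pairs G n + 2 * n"
proof -
  obtain w where w: "\<xi> w = Suc n"
    by (rule vertex_with_index)
  have "card {u \<in> trunc_vertices \<xi> n. {u, w} \<in> G} \<le> n"
    using card_mono[OF finite_trunc_vertices, of "{u \<in> trunc_vertices \<xi> n. {u, w} \<in> G}"]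
    by (simp add: card_trunc_vertices)
  then show ?thesis
    by (simp add: edge_pairs_Suc[OF w])
qed

lemma edge_density_steps_vanish:
  fixes G :: "'v set set"
  defines "x \<equiv> \<lambda>n. t_ind K2_V K2_E (trunc_vertices \<xi> n) (trunc_edges \<xi> G n)"
  shows "(\<lambda>n. x (Suc n) - x n) \<longlonglongrightarrow> 0"
proof -
  have "edge_pairs G 0 = 0"
    by (simp add: edge_pairs_def trunc_vertices_def ordered_edges_def)
  then show ?thesis
    unfolding x_def edge_density_eq
    by (rule pair_density_steps_vanish) (use edge_pairs_growth in auto)
qed

lemma S_lim_bounds:
  assumes "finite VH"
  shows "closed (S_lim \<xi> VH EH G) \<and> S_lim \<xi> VH EH G \<noteq> {} \<and> S_lim \<xi> VH EH G \<subseteq> {0..1}"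
proof -
  have range: "t_ind VH EH (trunc_vertices \<xi> n) (trunc_edges \<xi> G n) \<in> {0..1}" for n
    using t_ind_bounds[OF assms finite_trunc_vertices] .
  show ?thesis
    unfolding S_lim_eq_subseq_limits
    by (intro conjI closed_subseq_limits subseq_limits_nonempty[OF compact_Icc range]
        subseq_limits_subset[OF closed_atLeastAtMost range])
qed

lemma S_lim_K2_interval: "\<exists>a b. 0 \<le> a \<and> a \<le> b \<and> b \<le> 1 \<and> S_lim \<xi> K2_V K2_E G = {a..b}"
  unfolding S_lim_eq_subseq_limits
proof (rule subseq_limits_interval)
  show "t_ind K2_V K2_E (trunc_vertices \<xi> n) (trunc_edges \<xi> G n) \<in> {0..1}" for n
    by (rule t_ind_bounds[OF _ finite_trunc_vertices]) (simp add: K2_V_def)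
qed (rule edge_density_steps_vanish)

end

(* The phases [w_k, w_(k+1)) of the construction.  Squaring makes every phase so long that
   the deviation accumulated before it becomes negligible by its end. *)
primrec phase_end :: "nat \<Rightarrow> nat" where
  "phase_end 0 = 2"
| "phase_end (Suc k) = phase_end k ^ 2"

lemma phase_end_ge_two: "phase_end k \<ge> 2"
proof (induction k)
  case (Suc k)
  then show ?case
    using self_le_power[of "phase_end k" 2] by simp
qed simp

lemma phase_end_less_Suc: "phase_end k < phase_end (Suc k)"
proof -
  have "phase_end k * 1 < phase_end k * phase_end k"
    using phase_end_ge_two[of k] by (intro mult_strict_left_mono) auto
  then show ?thesis
    by (simp add: power2_eq_square)
qed

declare phase_end.simps(2) [simp del]

lemma strict_mono_phase_end: "strict_mono phase_end"
  unfolding strict_mono_Suc_iff using phase_end_less_Suc by blast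

lemma phase_unique:
  assumes "phase_end k \<le> n" "n < phase_end (Suc k)" "phase_end k' \<le> n" "n < phase_end (Suc k')"
  shows "k = k'"
proof (rule ccontr)
  assume "k \<noteq> k'"
  then have "Suc k \<le> k' \<or> Suc k' \<le> k"
    by linarith
  then show False
    using assms strict_mono_less_eq[OF strict_mono_phase_end] by (meson le_trans not_le)
qed

definition target :: "real \<Rightarrow> real \<Rightarrow> nat \<Rightarrow> real" where
  "target a b n = (if \<exists>k. even k \<and> phase_end k \<le> n \<and> n < phase_end (Suc k) then b else a)"

lemma target_in_phase:
  assumes "phase_end k \<le> n" "n < phase_end (Suc k)"
  shows "target a b n = (if even k then b else a)"
proof -
  have "(\<exists>k'. even k' \<and> phase_end k' \<le> n \<and> n < phase_end (Suc k')) \<longleftrightarrow> even k"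
    using phase_unique[OF assms] assms by blast
  then show ?thesis
    by (simp add: target_def)
qed

lemma target_between: "a \<le> b \<Longrightarrow> a \<le> target a b n \<and> target a b n \<le> b"
  by (simp add: target_def)

primrec greedy_count :: "real \<Rightarrow> real \<Rightarrow> nat \<Rightarrow> nat" where
  "greedy_count a b 0 = 0"
| "greedy_count a b (Suc n) = greedy_count a b n +
     (if real (greedy_count a b n) < target a b n * (real n * (real n - 1)) then 2 * n else 0)"

definition greedy_joins :: "real \<Rightarrow> real \<Rightarrow> nat \<Rightarrow> bool" where
  "greedy_joins a b n \<longleftrightarrow> real (greedy_count a b n) < target a b n * (real n * (real n - 1))"

lemma greedy_count_Suc [simp]:
  "greedy_count a b (Suc n) = greedy_count a b n + (if greedy_joins a b n then 2 * n else 0)"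
  by (simp only: greedy_count.simps greedy_joins_def)

declare greedy_count.simps(2) [simp del]

definition deviation :: "real \<Rightarrow> real \<Rightarrow> real \<Rightarrow> nat \<Rightarrow> real" where
  "deviation a b T n = real (greedy_count a b n) - T * (real n * (real n - 1))"

lemma deviation_Suc:
  "deviation a b T (Suc n) = deviation a b T n + (if greedy_joins a b n then 2 * real n else 0) - 2 * (T * real n)"
  unfolding deviation_def greedy_count_Suc by (simp add: algebra_simps)

(* Since the target is at least a, the greedy count never falls more than one step (2n pairs)
   below density a; dually it never exceeds density b by more than 2n pairs. *)
lemma deviation_lower:
  assumes "0 \<le> a" "a \<le> b" "a \<le> 1"
  shows "deviation a b a n \<ge> - 2 * real n"
proof (induction n)
  case (Suc n)
  have "a * (real n * (real n - 1)) \<le> target a b n * (real n * (real n - 1))"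
    by (intro mult_right_mono) (simp_all add: target_between[OF assms(2)] pair_count_nonneg)
  then have "\<not> greedy_joins a b n \<Longrightarrow> deviation a b a n \<ge> 0"
    by (simp add: greedy_joins_def deviation_def)
  moreover have "a * real n \<le> real n"
    using assms by (simp add: mult_left_le_one_le)
  ultimately show ?case
    using Suc assms(1) by (auto simp: deviation_Suc)
qed (simp add: deviation_def)

lemma deviation_upper:
  assumes "0 \<le> b" "a \<le> b" "b \<le> 1"
  shows "deviation a b b n \<le> 2 * real n"
proof (induction n)
  case (Suc n)
  have "target a b n * (real n * (real n - 1)) \<le> b * (real n * (real n - 1))"
    by (intro mult_right_mono) (simp_all add: target_between[OF assms(2)] pair_count_nonneg)
  then have "greedy_joins a b n \<Longrightarrow> deviation a b b n < 0"
    by (simp add: greedy_joins_def deviation_def)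
  moreover have "0 \<le> b * real n"
    using assms(1) by simp
  ultimately show ?case
    using Suc by (auto simp: deviation_Suc)
qed (simp add: deviation_def)

lemma greedy_count_growth:
  "greedy_count a b n \<le> greedy_count a b (Suc n) \<and> greedy_count a b (Suc n) \<le> greedy_count a b n + 2 * n"
  by simp

lemma greedy_count_le: "real (greedy_count a b n) \<le> real n * (real n - 1)"
proof (induction n)
  case (Suc n)
  have "real (greedy_count a b (Suc n)) \<le> real (greedy_count a b n) + 2 * real n"
    by simp
  with Suc show ?case
    by (simp add: algebra_simps)
qed simp

(* While the target stays at T, the greedy rule steers towards T: the deviation from T never
   grows beyond its initial size or 2n. *)
lemma deviation_in_phase:
  assumes T: "0 \<le> T" "T \<le> 1" and "m \<le> n"
    and phase: "\<And>j. m \<le> j \<Longrightarrow> j < n \<Longrightarrow> target a b j = T"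
  shows "\<bar>deviation a b T n\<bar> \<le> max \<bar>deviation a b T m\<bar> (2 * real n)"
  using \<open>m \<le> n\<close> phase
proof (induction n rule: dec_induct)
  case (step n)
  have "greedy_joins a b n \<longleftrightarrow> deviation a b T n < 0"
    using step.prems[of n] step.hyps by (simp add: greedy_joins_def deviation_def)
  moreover have "0 \<le> T * real n" "T * real n \<le> real n"
    using T by (simp_all add: mult_left_le_one_le)
  moreover have "\<bar>deviation a b T n\<bar> \<le> max \<bar>deviation a b T m\<bar> (2 * real (Suc n))"
    using step by simp
  moreover have "2 * real n \<le> max \<bar>deviation a b T m\<bar> (2 * real (Suc n))"
    by simp
  ultimately show ?case
    unfolding deviation_Suc abs_le_iff by auto
qed simp

(* At the end of phase k the deviation from that phase's target is at most 2 w_(k+1), because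
   the initial deviation is at most w_k^2 = w_(k+1). *)
lemma deviation_at_phase_end:
  fixes a b :: real and k :: nat
  assumes "0 \<le> a" "a \<le> b" "b \<le> 1"
  defines "T \<equiv> if even k then b else a"
  shows "\<bar>deviation a b T (phase_end (Suc k))\<bar> \<le> 2 * real (phase_end (Suc k))"
proof -
  let ?m = "phase_end k" and ?n = "phase_end (Suc k)"
  have T: "0 \<le> T" "T \<le> 1"
    using assms by (auto simp: T_def)
  have "0 \<le> T * (real ?m * (real ?m - 1))" "T * (real ?m * (real ?m - 1)) \<le> real ?m * (real ?m - 1)"
    using T pair_count_nonneg[of ?m] by (simp_all add: mult_left_le_one_le)
  moreover have "real ?m * (real ?m - 1) \<le> real ?m * real ?m"
    by (simp add: algebra_simps)
  ultimately have "\<bar>deviation a b T ?m\<bar> \<le> real ?m * real ?m"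
    using greedy_count_le[of a b ?m] unfolding deviation_def abs_le_iff by linarith
  also have "\<dots> = real ?n"
    by (simp add: phase_end.simps(2) power2_eq_square)
  finally have "\<bar>deviation a b T ?m\<bar> \<le> real ?n" .
  moreover have "\<bar>deviation a b T ?n\<bar> \<le> max \<bar>deviation a b T ?m\<bar> (2 * real ?n)"
    using deviation_in_phase[OF T less_imp_le[OF phase_end_less_Suc]] target_in_phase[of k]
    by (simp add: T_def)
  ultimately show ?thesis
    by simp
qed

lemma scaled_by_pairs_le:
  fixes F :: real
  assumes "n \<ge> 2" "F \<le> 2 * real n"
  shows "F / (real n * (real n - 1)) \<le> 2 / (real n - 1)"
proof -
  have pos: "real n * (real n - 1) > 0"
    using assms(1) by simp
  have "F / (real n * (real n - 1)) \<le> 2 * real n / (real n * (real n - 1))"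
    using assms(2) pos by (intro divide_right_mono) auto
  also have "\<dots> = 2 / (real n - 1)"
    using assms(1) by (metis mult.commute nonzero_mult_divide_mult_cancel_left of_nat_eq_0_iff not_numeral_le_zero)
  finally show ?thesis .
qed

definition greedy_density :: "real \<Rightarrow> real \<Rightarrow> nat \<Rightarrow> real" where
  "greedy_density a b n = real (greedy_count a b n) / (real n * (real n - 1))"

lemma greedy_density_minus:
  assumes "n \<ge> 2"
  shows "greedy_density a b n - T = deviation a b T n / (real n * (real n - 1))"
proof -
  have "real n * (real n - 1) \<noteq> 0"
    using assms by simp
  then show ?thesis
    by (simp add: greedy_density_def deviation_def diff_divide_distrib)
qed

lemma greedy_density_bounds:
  assumes ab: "0 \<le> a" "a \<le> b" "b \<le> 1" and n: "n \<ge> 2"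
  shows "a - 2 / (real n - 1) \<le> greedy_density a b n" "greedy_density a b n \<le> b + 2 / (real n - 1)"
proof -
  have "- deviation a b a n / (real n * (real n - 1)) \<le> 2 / (real n - 1)"
    using scaled_by_pairs_le[OF n, of "- deviation a b a n"] deviation_lower[of a b n] ab by simp
  then show "a - 2 / (real n - 1) \<le> greedy_density a b n"
    using greedy_density_minus[OF n, of a b a] by simp
  have "deviation a b b n / (real n * (real n - 1)) \<le> 2 / (real n - 1)"
    using scaled_by_pairs_le[OF n] deviation_upper[of b a n] ab by simp
  then show "greedy_density a b n \<le> b + 2 / (real n - 1)"
    using greedy_density_minus[OF n, of a b b] by simp
qed

lemma greedy_density_at_phase_end:
  assumes "0 \<le> a" "a \<le> b" "b \<le> 1"
  shows "\<bar>greedy_density a b (phase_end (Suc k)) - (if even k then b else a)\<bar>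
           \<le> 2 / (real (phase_end (Suc k)) - 1)"
proof -
  let ?n = "phase_end (Suc k)" and ?T = "if even k then b else a"
  have n: "?n \<ge> 2"
    by (rule phase_end_ge_two)
  have "\<bar>deviation a b ?T ?n\<bar> \<le> 2 * real ?n"
    using deviation_at_phase_end[OF assms] by simp
  then have "deviation a b ?T ?n / (real ?n * (real ?n - 1)) \<le> 2 / (real ?n - 1)"
    and "- deviation a b ?T ?n / (real ?n * (real ?n - 1)) \<le> 2 / (real ?n - 1)"
    using scaled_by_pairs_le[OF n, of "deviation a b ?T ?n"] scaled_by_pairs_le[OF n, of "- deviation a b ?T ?n"]
    by (simp_all only: abs_le_iff)
  then show ?thesis
    using greedy_density_minus[OF n, of a b ?T] unfolding abs_le_iff by linarith
qed

(* Hence its accumulation points are exactly [a,b]: a and b are approached at the ends of odd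
   and even phases, nothing outside [a,b] is approached, and the set is convex. *)
lemma greedy_density_limits:
  assumes ab: "0 \<le> a" "a \<le> b" "b \<le> 1"
  shows "subseq_limits (greedy_density a b) = {a..b}"
proof -
  let ?x = "greedy_density a b" and ?e = "\<lambda>n. 2 / (real n - 1)"
  have phases: "strict_mono (\<lambda>j. phase_end (Suc (2 * j + i)))" for i
    by (rule strict_monoI) (simp add: strict_mono_less[OF strict_mono_phase_end])
  have "\<bar>?x (phase_end (Suc (2 * j + 0))) - b\<bar> \<le> ?e (phase_end (Suc (2 * j + 0)))" for j
    using greedy_density_at_phase_end[OF ab, of "2 * j"] by simp
  then have b: "b \<in> subseq_limits ?x"
    by (rule subseq_limitsI[OF phases _ two_div_pred_tendsto_zero])
  have "\<bar>?x (phase_end (Suc (2 * j + 1))) - a\<bar> \<le> ?e (phase_end (Suc (2 * j + 1)))" for j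
    using greedy_density_at_phase_end[OF ab, of "2 * j + 1"] by simp
  then have a: "a \<in> subseq_limits ?x"
    by (rule subseq_limitsI[OF phases _ two_div_pred_tendsto_zero])
  have eventually_bounds: "eventually (\<lambda>n. a - ?e n \<le> ?x n \<and> ?x n \<le> b + ?e n) sequentially"
    unfolding eventually_sequentially using greedy_density_bounds[OF ab] by blast
  have "subseq_limits ?x \<subseteq> {a..b}"
  proof
    fix L
    assume L: "L \<in> subseq_limits ?x"
    have "a \<le> L"
      by (rule subseq_limits_ge[OF L _ tendsto_diff[OF tendsto_const two_div_pred_tendsto_zero, simplified]])
         (use eventually_bounds in \<open>auto elim: eventually_mono\<close>)
    moreover have "L \<le> b"
      by (rule subseq_limits_le[OF L _ tendsto_add[OF tendsto_const two_div_pred_tendsto_zero, simplified]])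
         (use eventually_bounds in \<open>auto elim: eventually_mono\<close>)
    ultimately show "L \<in> {a..b}"
      by simp
  qed
  moreover have "(\<lambda>n. ?x (Suc n) - ?x n) \<longlonglongrightarrow> 0"
    unfolding greedy_density_def
    by (rule pair_density_steps_vanish) (use greedy_count_growth in auto)
  then have "{a..b} \<subseteq> subseq_limits ?x"
    using subseq_limits_convex[OF _ a b] by auto
  ultimately show ?thesis
    by blast
qed

context vertex_enumeration
begin

(* The graph realising the greedy count: u and v with xi u < xi v are adjacent iff the greedy
   rule joins vertex xi v to its predecessors. *)
definition greedy_graph :: "real \<Rightarrow> real \<Rightarrow> 'v set set" where
  "greedy_graph a b = {{u, v} | u v. \<xi> u < \<xi> v \<and> greedy_joins a b (\<xi> v - 1)}"

lemma greedy_graph_in_graphs_on: "greedy_graph a b \<in> graphs_on UNIV"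
proof -
  have "card {u, v} = 2" if "\<xi> u < \<xi> v" for u v
    using that by (cases "u = v") auto
  then show ?thesis
    by (auto simp: greedy_graph_def graphs_on_def two_subsets_def)
qed

lemma greedy_graph_neighbours:
  assumes w: "\<xi> w = Suc n"
  shows "{u \<in> trunc_vertices \<xi> n. {u, w} \<in> greedy_graph a b}
       = (if greedy_joins a b n then trunc_vertices \<xi> n else {})"
proof -
  have "{u, w} \<in> greedy_graph a b \<longleftrightarrow> greedy_joins a b n" if "\<xi> u \<le> n" for u
  proof
    assume "{u, w} \<in> greedy_graph a b"
    then obtain p q where pq: "{u, w} = {p, q}" "\<xi> p < \<xi> q" "greedy_joins a b (\<xi> q - 1)"
      by (auto simp: greedy_graph_def)
    then have "q = w"
      using that w by (auto simp: doubleton_eq_iff)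
    with pq w show "greedy_joins a b n"
      by simp
  next
    assume "greedy_joins a b n"
    then show "{u, w} \<in> greedy_graph a b"
      using that w unfolding greedy_graph_def by force
  qed
  then show ?thesis
    by (auto simp: trunc_vertices_def)
qed

lemma edge_pairs_greedy_graph: "edge_pairs (greedy_graph a b) n = greedy_count a b n"
proof (induction n)
  case 0
  then show ?case
    by (simp add: edge_pairs_def trunc_vertices_def ordered_edges_def)
next
  case (Suc n)
  obtain w where "\<xi> w = Suc n"
    by (rule vertex_with_index)
  then show ?case
    using Suc by (simp add: edge_pairs_Suc greedy_graph_neighbours card_trunc_vertices)
qed

lemma S_lim_greedy_graph:
  assumes "0 \<le> a" "a \<le> b" "b \<le> 1"
  shows "S_lim \<xi> K2_V K2_E (greedy_graph a b) = {a..b}"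
proof -
  have "(\<lambda>n. t_ind K2_V K2_E (trunc_vertices \<xi> n) (trunc_edges \<xi> (greedy_graph a b) n))
      = greedy_density a b"
    by (simp add: fun_eq_iff edge_density_eq edge_pairs_greedy_graph greedy_density_def)
  then show ?thesis
    unfolding S_lim_eq_subseq_limits using greedy_density_limits[OF assms] by simp
qed

end

theorem theorem4p1:
  fixes \<xi> :: "'v \<Rightarrow> nat"
  assumes "bij_betw \<xi> UNIV {1..}"
  shows "(\<forall>(VH :: 'a set) EH G. finite_simple_graph VH EH \<and> G \<in> graphs_on (UNIV :: 'v set) \<longrightarrow>
            closed (S_lim \<xi> VH EH G) \<and> S_lim \<xi> VH EH G \<noteq> {} \<and> S_lim \<xi> VH EH G \<subseteq> {0..1})
       \<and> (\<forall>G \<in> graphs_on (UNIV :: 'v set). \<exists>a b. 0 \<le> a \<and> a \<le> b \<and> b \<le> 1 \<and>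
            S_lim \<xi> K2_V K2_E G = {a..b})
       \<and> (\<forall>a b :: real. 0 \<le> a \<and> a \<le> b \<and> b \<le> 1 \<longrightarrow>
            (\<exists>G \<in> graphs_on (UNIV :: 'v set). S_lim \<xi> K2_V K2_E G = {a..b}))"
proof -
  interpret vertex_enumeration \<xi>
    by (rule vertex_enumeration.intro) (rule assms)
  have "closed (S_lim \<xi> VH EH G) \<and> S_lim \<xi> VH EH G \<noteq> {} \<and> S_lim \<xi> VH EH G \<subseteq> {0..1}"
    if "finite_simple_graph VH EH" for VH :: "'a set" and EH G
    using S_lim_bounds that unfolding finite_simple_graph_def by blast
  moreover have "\<exists>G \<in> graphs_on UNIV. S_lim \<xi> K2_V K2_E G = {a..b}"
    if "0 \<le> a" "a \<le> b" "b \<le> 1" for a b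
    using greedy_graph_in_graphs_on S_lim_greedy_graph[OF that] by blast
  ultimately show ?thesis
    using S_lim_K2_interval by blast
qed

end
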